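(* Let $A$ be a commutative unital $\mathbb{K}$-algebra. Then $(T^+(A),\bar\bullet^\ell,P_A)$, together with the unital algebra morphism $i_A:A\to T^+(A)$, $i_A(a)=a\otimes1_{\mathbb{K}}$, is the free unital commutative $TD$-algebra over $A$: for every unital commutative $TD$-algebra $(B,P)$ and every unital algebra morphism $\phi:A\to B$ there exists a unique $TD$-algebra morphism $\tilde\phi:T^+(A)\to B$ with $\tilde\phi\circ i_A=\phi$. (It is given by $\tilde\phi(a_1\otimes a_2\otimes\cdots\otimes a_n)=\phi(a_1)\,P\bigl(\tilde\phi(a_2\otimes\cdots\otimes a_n)\bigr)$.)
   Context: $\mathbb{K}$ is a field of characteristic $0$, $A$ has product $[a;b]$ and unit $1_A$. $T(A)=\bigoplus_{n\ge0}A^{\otimes n}$ with $A^{\otimes0}=\mathbb{K}1_{\mathbb{K}}$; $a\otimes1_{\mathbb{K}}$ is identified with $a$. The left-shift shuffle $\bullet^\ell$ is the bilinear product on $T(A)$ with $k1_{\mathbb{K}}\bullet^\ell U=kU=U\bullet^\ell k1_{\mathbb{K}}$ and, for $a,b\in A$, $U,V\in T(A)$, $(a\otimes U)\bullet^\ell(b\otimes V)=a\otimes\bigl(U\bullet^\ell(b\otimes V)\bigr)+b\otimes\bigl((a\otimes U)\bullet^\ell V\bigr)-[a;b]\otimes1_A\otimes(U\bullet^\ell V)$. $T^+(A):=A\otimes T(A)=\bigoplus_{n\ge1}A^{\otimes n}$ with product $(a\otimes U)\,\bar\bullet^\ell\,(b\otimes V):=[a;b]\otimes(U\bullet^\ell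 V)$ and unit $1_A\otimes1_{\mathbb{K}}$. $P_A:T^+(A)\to T^+(A)$ is the linear map $P_A(a_1\otimes\cdots\otimes a_n)=1_A\otimes a_1\otimes\cdots\otimes a_n$. A $TD$-algebra is a pair $(B,P)$, $B$ a unital associative algebra, $P:B\to B$ linear with $P(x)P(y)=P\bigl(P(x)y+xP(y)\bigr)-P\bigl(x\,P(1_B)\,y\bigr)$ for all $x,y$. A $TD$-algebra morphism $(B_1,P_1)\to(B_2,P_2)$ is a unital algebra homomorphism $f$ with $fP_1=P_2f$. *)

theory Defs
  imports Main "HOL.Vector_Spaces" "HOL-Library.Poly_Mapping"
begin

text \<open>Scalars: a field 'k of characteristic 0.  A commutative unital
K-algebra A is a type 'a of class comm_ring_1 with a scalar multiplication sa making it a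
K-vector space compatible with the product.  Tensor words a1 (x) ... (x) an are lists of
elements of 'a.  The free K-module on words is 'a list =>0 'k (finitely supported);
T^+(A) is represented by the free K-module on nonempty words, encoded as pairs (a1,[a2..an]),
modulo the subspace tp_rel sa of multilinearity relations.  Operations are defined on
representatives (on pure tensors and extended bilinearly).\<close>

definition kalg :: "('k::field \<Rightarrow> 'a::comm_ring_1 \<Rightarrow> 'a) \<Rightarrow> bool" where
  "kalg s \<longleftrightarrow> Vector_Spaces.vector_space s \<and> (\<forall>c x y. s c (x * y) = s c x * y)"

definition ualg_hom :: "('k::field \<Rightarrow> 'a::comm_ring_1 \<Rightarrow> 'a) \<Rightarrow> ('k \<Rightarrow> 'b::comm_ring_1 \<Rightarrow> 'b)
    \<Rightarrow> ('a \<Rightarrow> 'b) \<Rightarrow> bool" where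
  "ualg_hom s1 s2 f \<longleftrightarrow> Vector_Spaces.linear s1 s2 f \<and> f 1 = 1 \<and> (\<forall>x y. f (x * y) = f x * f y)"

definition td_alg :: "('k::field \<Rightarrow> 'b::comm_ring_1 \<Rightarrow> 'b) \<Rightarrow> ('b \<Rightarrow> 'b) \<Rightarrow> bool" where
  "td_alg s P \<longleftrightarrow> Vector_Spaces.linear s s P \<and>
     (\<forall>x y. P x * P y = P (P x * y + x * P y) - P (x * P 1 * y))"

definition pm_scale :: "'k::field \<Rightarrow> ('w \<Rightarrow>\<^sub>0 'k) \<Rightarrow> ('w \<Rightarrow>\<^sub>0 'k)" where
  "pm_scale c x = Poly_Mapping.map (\<lambda>t. c * t) x"

definition lcons :: "'a \<Rightarrow> ('a list \<Rightarrow>\<^sub>0 'k::field) \<Rightarrow> ('a list \<Rightarrow>\<^sub>0 'k)" where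
  "lcons a x = (\<Sum>w\<in>Poly_Mapping.keys x. Poly_Mapping.single (a # w) (Poly_Mapping.lookup x w))"

fun lsh :: "'a::comm_ring_1 list \<Rightarrow> 'a list \<Rightarrow> ('a list \<Rightarrow>\<^sub>0 'k::field)" where
  "lsh [] V = Poly_Mapping.single V 1"
| "lsh (a # U) [] = Poly_Mapping.single (a # U) 1"
| "lsh (a # U) (b # V) =
     lcons a (lsh U (b # V)) + lcons b (lsh (a # U) V) - lcons (a * b) (lcons 1 (lsh U V))"

definition tcons :: "'a \<Rightarrow> ('a list \<Rightarrow>\<^sub>0 'k::field) \<Rightarrow> ('a \<times> 'a list \<Rightarrow>\<^sub>0 'k)" where
  "tcons a x = (\<Sum>w\<in>Poly_Mapping.keys x. Poly_Mapping.single (a, w) (Poly_Mapping.lookup x w))"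

definition tp_mult_w :: "'a::comm_ring_1 \<times> 'a list \<Rightarrow> 'a \<times> 'a list \<Rightarrow> ('a \<times> 'a list \<Rightarrow>\<^sub>0 'k::field)" where
  "tp_mult_w u v = tcons (fst u * fst v) (lsh (snd u) (snd v))"

definition tp_mult :: "('a::comm_ring_1 \<times> 'a list \<Rightarrow>\<^sub>0 'k::field) \<Rightarrow> ('a \<times> 'a list \<Rightarrow>\<^sub>0 'k)
    \<Rightarrow> ('a \<times> 'a list \<Rightarrow>\<^sub>0 'k)" where
  "tp_mult x y = (\<Sum>u\<in>Poly_Mapping.keys x. \<Sum>v\<in>Poly_Mapping.keys y. pm_scale (Poly_Mapping.lookup x u * Poly_Mapping.lookup y v) (tp_mult_w u v))"

definition tp_one :: "('a::comm_ring_1 \<times> 'a list \<Rightarrow>\<^sub>0 'k::field)" where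
  "tp_one = Poly_Mapping.single (1, []) 1"

definition PA :: "('a::comm_ring_1 \<times> 'a list \<Rightarrow>\<^sub>0 'k::field) \<Rightarrow> ('a \<times> 'a list \<Rightarrow>\<^sub>0 'k)" where
  "PA x = (\<Sum>u\<in>Poly_Mapping.keys x. Poly_Mapping.single (1, fst u # snd u) (Poly_Mapping.lookup x u))"

definition iA :: "'a \<Rightarrow> ('a \<times> 'a list \<Rightarrow>\<^sub>0 'k::field)" where
  "iA a = Poly_Mapping.single (a, []) 1"

definition tword :: "'a list \<Rightarrow> ('a \<times> 'a list \<Rightarrow>\<^sub>0 'k::field)" where
  "tword w = Poly_Mapping.single (hd w, tl w) 1"

inductive_set tp_rel :: "('k::field \<Rightarrow> 'a \<Rightarrow> 'a::ab_group_add) \<Rightarrow> ('a \<times> 'a list \<Rightarrow>\<^sub>0 'k) set"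
  for s where
  zero: "0 \<in> tp_rel s"
| add: "x \<in> tp_rel s \<Longrightarrow> y \<in> tp_rel s \<Longrightarrow> x + y \<in> tp_rel s"
| scale: "x \<in> tp_rel s \<Longrightarrow> pm_scale c x \<in> tp_rel s"
| gen_add: "tword (xs @ (a + b) # ys) - tword (xs @ a # ys) - tword (xs @ b # ys) \<in> tp_rel s"
| gen_scale: "tword (xs @ s c a # ys) - pm_scale c (tword (xs @ a # ys)) \<in> tp_rel s"

definition tp_eq :: "('k::field \<Rightarrow> 'a \<Rightarrow> 'a::ab_group_add) \<Rightarrow> ('a \<times> 'a list \<Rightarrow>\<^sub>0 'k)
    \<Rightarrow> ('a \<times> 'a list \<Rightarrow>\<^sub>0 'k) \<Rightarrow> bool" where
  "tp_eq s x y \<longleftrightarrow> x - y \<in> tp_rel s"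

text \<open>(T^+(A), bar-bullet, P_A) is a unital commutative TD-algebra and i_A a unital algebra
morphism (all modulo tp_rel, which is shown to be an ideal stable under P_A).\<close>
definition tp_is_comm_td :: "('k::field \<Rightarrow> 'a::comm_ring_1 \<Rightarrow> 'a) \<Rightarrow> bool" where
  "tp_is_comm_td s \<longleftrightarrow>
     (\<forall>(x :: 'a \<times> 'a list \<Rightarrow>\<^sub>0 'k) y. x \<in> tp_rel s \<longrightarrow> tp_mult x y \<in> tp_rel s) \<and>
     (\<forall>(x :: 'a \<times> 'a list \<Rightarrow>\<^sub>0 'k). x \<in> tp_rel s \<longrightarrow> PA x \<in> tp_rel s) \<and>
     (\<forall>(x :: 'a \<times> 'a list \<Rightarrow>\<^sub>0 'k) y z. tp_eq s (tp_mult (tp_mult x y) z) (tp_mult x (tp_mult y z))) \<and>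
     (\<forall>(x :: 'a \<times> 'a list \<Rightarrow>\<^sub>0 'k) y. tp_eq s (tp_mult x y) (tp_mult y x)) \<and>
     (\<forall>(x :: 'a \<times> 'a list \<Rightarrow>\<^sub>0 'k). tp_eq s (tp_mult tp_one x) x) \<and>
     (\<forall>(x :: 'a \<times> 'a list \<Rightarrow>\<^sub>0 'k) y. tp_eq s (tp_mult (PA x) (PA y))
              (PA (tp_mult (PA x) y + tp_mult x (PA y)) - PA (tp_mult (tp_mult x (PA tp_one)) y))) \<and>
     (\<forall>a b. tp_eq s (iA (a + b) :: 'a \<times> 'a list \<Rightarrow>\<^sub>0 'k) (iA a + iA b)) \<and>
     (\<forall>c a. tp_eq s (iA (s c a)) (pm_scale c (iA a))) \<and>
     (\<forall>a b. tp_eq s (iA (a * b) :: 'a \<times> 'a list \<Rightarrow>\<^sub>0 'k) (tp_mult (iA a) (iA b))) \<and>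
     (iA 1 :: 'a \<times> 'a list \<Rightarrow>\<^sub>0 'k) = tp_one"

text \<open>psi : T^+(A) -> B is a TD-algebra morphism (given on representatives: it is
K-linear and vanishes on tp_rel, i.e. it is a linear map on the quotient).\<close>
definition tp_td_hom :: "('k::field \<Rightarrow> 'a::comm_ring_1 \<Rightarrow> 'a) \<Rightarrow> ('k \<Rightarrow> 'b::comm_ring_1 \<Rightarrow> 'b)
    \<Rightarrow> ('b \<Rightarrow> 'b) \<Rightarrow> (('a \<times> 'a list \<Rightarrow>\<^sub>0 'k) \<Rightarrow> 'b) \<Rightarrow> bool" where
  "tp_td_hom sa sb P \<psi> \<longleftrightarrow>
     (\<forall>x y. \<psi> (x + y) = \<psi> x + \<psi> y) \<and>
     (\<forall>c x. \<psi> (pm_scale c x) = sb c (\<psi> x)) \<and>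
     (\<forall>x. x \<in> tp_rel sa \<longrightarrow> \<psi> x = 0) \<and>
     \<psi> tp_one = 1 \<and>
     (\<forall>x y. \<psi> (tp_mult x y) = \<psi> x * \<psi> y) \<and>
     (\<forall>x. \<psi> (PA x) = P (\<psi> x))"

end

theory Submission
  imports Defs
begin

(* The product of T^+(A) is (a (x) U)(b (x) V) = ab (x) (U shuffle V), so commutativity,
   associativity and the TD identity of T^+(A) reduce to the left-shift shuffle: the TD identity
   for P_A is literally the defining recursion of the shuffle, and associativity holds because
   both bracketings of a triple shuffle obey one and the same recursion in the first letters.
   The multilinearity relations are letter relations plugged in at one position of a word; they
   are stable under multiplying letters on the right, which is why shuffling, and hence the
   product and P_A, preserve them.

   The extension is forced, because a (x) c (x) w = i_A(a) P_A(c (x) w): it must send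
   a (x) w to phi(a) W(w), where W [] = 1 and W (c # w) = P (phi(c) W(w)).  It is multiplicative
   because W turns shuffles into products, by the TD identity of B together with
   P (P z) = P z P(1). *)

section \<open>Linear extension from a basis\<close>

lemma lookup_pm_scale [simp]: "Poly_Mapping.lookup (pm_scale c x) u = c * Poly_Mapping.lookup x u"
  unfolding pm_scale_def by transfer (simp add: when_def)

lemma pm_scale_single [simp]: "pm_scale c (Poly_Mapping.single u d) = Poly_Mapping.single u (c * d)"
  by (rule poly_mapping_eqI) (simp add: lookup_single when_def)

interpretation pm: vector_space "pm_scale :: 'k::field \<Rightarrow> ('w \<Rightarrow>\<^sub>0 'k) \<Rightarrow> _"
  by unfold_locales (auto intro: poly_mapping_eqI simp: lookup_add algebra_simps)

lemma poly_mapping_single_induct [case_names zero add]: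
  assumes "P 0" and "\<And>u c x. P x \<Longrightarrow> P (Poly_Mapping.single u c + x)"
  shows "P x"
proof (induction x rule: update_induct)
  case const
  show ?case using assms(1) .
next
  case (update f a b)
  have "Poly_Mapping.update a b f = Poly_Mapping.single a b + f"
    using update(1)
    by (intro poly_mapping_eqI) (auto simp: lookup_update lookup_add lookup_single when_def in_keys_iff)
  then show ?case using assms(2) update(3) by simp
qed

lemma additive_poly_mapping_eqI:
  fixes f g :: "('w \<Rightarrow>\<^sub>0 'k::ab_group_add) \<Rightarrow> 'm::ab_group_add"
  assumes "additive f" and "additive g"
    and "\<And>u c. f (Poly_Mapping.single u c) = g (Poly_Mapping.single u c)"
  shows "f x = g x"
proof (induction x rule: poly_mapping_single_induct)
  case zero
  show ?case using additive.zero[OF assms(1)] additive.zero[OF assms(2)] by simp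
next
  case (add u c x)
  then show ?case using additive.add[OF assms(1)] additive.add[OF assms(2)] assms(3) by simp
qed

lemma biadditive_poly_mapping_eqI:
  fixes F G :: "('v \<Rightarrow>\<^sub>0 'k::ab_group_add) \<Rightarrow> ('w \<Rightarrow>\<^sub>0 'k) \<Rightarrow> 'm::ab_group_add"
  assumes "\<And>y. additive (\<lambda>x. F x y)" and "\<And>x. additive (F x)"
    and "\<And>y. additive (\<lambda>x. G x y)" and "\<And>x. additive (G x)"
    and "\<And>u c v d. F (Poly_Mapping.single u c) (Poly_Mapping.single v d) =
                    G (Poly_Mapping.single u c) (Poly_Mapping.single v d)"
  shows "F x y = G x y"
proof (rule additive_poly_mapping_eqI[where f = "\<lambda>x. F x y" and g = "\<lambda>x. G x y", OF assms(1,3)])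
  show "F (Poly_Mapping.single u c) y = G (Poly_Mapping.single u c) y" for u c
    by (rule additive_poly_mapping_eqI[OF assms(2,4,5)])
qed

definition lin_ext :: "('k::zero \<Rightarrow> 'm \<Rightarrow> 'm) \<Rightarrow> ('w \<Rightarrow> 'm) \<Rightarrow> ('w \<Rightarrow>\<^sub>0 'k) \<Rightarrow> 'm::comm_monoid_add" where
  "lin_ext s h x = (\<Sum>u\<in>Poly_Mapping.keys x. s (Poly_Mapping.lookup x u) (h u))"

context vector_space
begin

lemma lin_ext_zero [simp]: "lin_ext scale h 0 = 0"
  by (simp add: lin_ext_def)

lemma lin_ext_single [simp]: "lin_ext scale h (Poly_Mapping.single u c) = c *s h u"
  by (cases "c = 0") (simp_all add: lin_ext_def)

lemma lin_ext_add: "lin_ext scale h (x + y) = lin_ext scale h x + lin_ext scale h y"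
proof -
  have on_union: "lin_ext scale h z =
      (\<Sum>u\<in>Poly_Mapping.keys x \<union> Poly_Mapping.keys y. Poly_Mapping.lookup z u *s h u)"
    if "Poly_Mapping.keys z \<subseteq> Poly_Mapping.keys x \<union> Poly_Mapping.keys y" for z
    unfolding lin_ext_def using that by (intro sum.mono_neutral_left) (auto simp: in_keys_iff)
  show ?thesis
    using keys_add[of x y]
    by (simp add: on_union lookup_add scale_left_distrib sum.distrib)
qed

lemma additive_lin_ext: "additive (lin_ext scale h)"
  by unfold_locales (rule lin_ext_add)

lemma lin_ext_diff: "lin_ext scale h (x - y) = lin_ext scale h x - lin_ext scale h y"
  by (rule additive.diff[OF additive_lin_ext])

lemma lin_ext_pm_scale: "lin_ext scale h (pm_scale c x) = c *s lin_ext scale h x"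
proof (rule additive_poly_mapping_eqI[where f = "\<lambda>x. lin_ext scale h (pm_scale c x)"])
  show "additive (\<lambda>x. lin_ext scale h (pm_scale c x))"
    by unfold_locales (simp add: pm.scale_right_distrib lin_ext_add)
  show "additive (\<lambda>x. c *s lin_ext scale h x)"
    by unfold_locales (simp add: lin_ext_add scale_right_distrib)
qed simp

lemma lin_ext_fun_add: "lin_ext scale (\<lambda>u. h u + g u) x = lin_ext scale h x + lin_ext scale g x"
  by (simp add: lin_ext_def scale_right_distrib sum.distrib)

lemma lin_ext_fun_diff: "lin_ext scale (\<lambda>u. h u - g u) x = lin_ext scale h x - lin_ext scale g x"
  by (simp add: lin_ext_def scale_right_diff_distrib sum_subtractf)

lemma lin_ext_fun_scale: "lin_ext scale (\<lambda>u. c *s h u) x = c *s lin_ext scale h x"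
  by (simp add: lin_ext_def scale_left_commute scale_sum_right mult.commute)

lemma lin_ext_compose:
  assumes "\<And>v w. L (v + w) = L v + L w" and "\<And>c v. L (pm_scale c v) = c *s L v"
  shows "L (lin_ext pm_scale g x) = lin_ext scale (\<lambda>u. L (g u)) x"
proof (rule additive_poly_mapping_eqI[where f = "\<lambda>x. L (lin_ext pm_scale g x)"])
  show "additive (\<lambda>x. L (lin_ext pm_scale g x))"
    by unfold_locales (simp add: assms(1) pm.lin_ext_add)
qed (simp_all add: additive_lin_ext assms(2) pm.lin_ext_single)

end

definition bilin_ext :: "('v \<Rightarrow> 'w \<Rightarrow> ('z \<Rightarrow>\<^sub>0 'k::field)) \<Rightarrow> ('v \<Rightarrow>\<^sub>0 'k) \<Rightarrow> ('w \<Rightarrow>\<^sub>0 'k) \<Rightarrow> ('z \<Rightarrow>\<^sub>0 'k)" where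
  "bilin_ext h x y = lin_ext pm_scale (\<lambda>u. lin_ext pm_scale (h u) y) x"

lemma bilin_ext_single [simp]:
  "bilin_ext h (Poly_Mapping.single u c) (Poly_Mapping.single v d) = pm_scale (c * d) (h u v)"
  by (simp add: bilin_ext_def)

lemma bilin_ext_zero [simp]: "bilin_ext h 0 y = 0" "bilin_ext h x 0 = 0"
  by (simp_all add: bilin_ext_def lin_ext_def)

lemma
  shows bilin_ext_add_left: "bilin_ext h (x + x') y = bilin_ext h x y + bilin_ext h x' y"
    and bilin_ext_add_right: "bilin_ext h x (y + y') = bilin_ext h x y + bilin_ext h x y'"
    and bilin_ext_diff_left: "bilin_ext h (x - x') y = bilin_ext h x y - bilin_ext h x' y"
    and bilin_ext_scale_left: "bilin_ext h (pm_scale c x) y = pm_scale c (bilin_ext h x y)"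
    and bilin_ext_scale_right: "bilin_ext h x (pm_scale c y) = pm_scale c (bilin_ext h x y)"
  by (simp_all add: bilin_ext_def pm.lin_ext_add pm.lin_ext_diff pm.lin_ext_pm_scale
      pm.lin_ext_fun_add pm.lin_ext_fun_diff pm.lin_ext_fun_scale)

lemma bilin_ext_single_coeff:
  shows "bilin_ext h (Poly_Mapping.single u c) y = pm_scale c (bilin_ext h (Poly_Mapping.single u 1) y)"
    and "bilin_ext h x (Poly_Mapping.single v d) = pm_scale d (bilin_ext h x (Poly_Mapping.single v 1))"
  using bilin_ext_scale_left[of h c "Poly_Mapping.single u 1" y]
    bilin_ext_scale_right[of h x d "Poly_Mapping.single v 1"] by simp_all

lemma additive_bilin_ext: "additive (\<lambda>x. bilin_ext h x y)" "additive (bilin_ext h x)"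
  by (simp_all add: additive_def bilin_ext_add_left bilin_ext_add_right)

section \<open>The operations of T(A) and T^+(A) on the free modules of words\<close>

lemma lcons_eq_lin_ext: "lcons a = lin_ext pm_scale (\<lambda>w. Poly_Mapping.single (a # w) 1)"
  by (simp add: fun_eq_iff lcons_def lin_ext_def)

lemma tcons_eq_lin_ext: "tcons a = lin_ext pm_scale (\<lambda>w. Poly_Mapping.single (a, w) 1)"
  by (simp add: fun_eq_iff tcons_def lin_ext_def)

lemma PA_eq_lin_ext: "PA = lin_ext pm_scale (\<lambda>(a, w). Poly_Mapping.single (1, a # w) 1)"
  by (simp add: fun_eq_iff PA_def lin_ext_def case_prod_beta)

lemma tp_mult_eq_bilin_ext: "tp_mult = bilin_ext tp_mult_w"
  by (simp add: fun_eq_iff tp_mult_def bilin_ext_def lin_ext_def pm.scale_sum_right)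

lemma
  shows lcons_single [simp]: "lcons a (Poly_Mapping.single w c) = Poly_Mapping.single (a # w) c"
    and lcons_zero [simp]: "lcons a 0 = 0"
    and lcons_add: "lcons a (x + y) = lcons a x + lcons a y"
    and lcons_diff: "lcons a (x - y) = lcons a x - lcons a y"
    and lcons_pm_scale: "lcons a (pm_scale c x) = pm_scale c (lcons a x)"
  by (simp_all add: lcons_eq_lin_ext pm.lin_ext_add pm.lin_ext_diff pm.lin_ext_pm_scale)

lemma
  shows tcons_single [simp]: "tcons a (Poly_Mapping.single w c) = Poly_Mapping.single (a, w) c"
    and tcons_add: "tcons a (x + y) = tcons a x + tcons a y"
    and tcons_diff: "tcons a (x - y) = tcons a x - tcons a y"
    and tcons_pm_scale: "tcons a (pm_scale c x) = pm_scale c (tcons a x)"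
  by (simp_all add: tcons_eq_lin_ext pm.lin_ext_add pm.lin_ext_diff pm.lin_ext_pm_scale)

lemma
  shows PA_single [simp]: "PA (Poly_Mapping.single (a, w) c) = Poly_Mapping.single (1, a # w) c"
    and PA_zero [simp]: "PA 0 = 0"
    and PA_add: "PA (x + y) = PA x + PA y"
    and PA_diff: "PA (x - y) = PA x - PA y"
    and PA_pm_scale: "PA (pm_scale c x) = pm_scale c (PA x)"
  by (simp_all add: PA_eq_lin_ext pm.lin_ext_add pm.lin_ext_diff pm.lin_ext_pm_scale)

lemma
  shows tp_mult_zero [simp]: "tp_mult 0 y = 0" "tp_mult x 0 = 0"
    and tp_mult_add_left: "tp_mult (x + x') y = tp_mult x y + tp_mult x' y"
    and tp_mult_add_right: "tp_mult x (y + y') = tp_mult x y + tp_mult x y'"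
    and tp_mult_scale_left: "tp_mult (pm_scale c x) y = pm_scale c (tp_mult x y)"
  by (simp_all add: tp_mult_eq_bilin_ext bilin_ext_add_left bilin_ext_add_right
      bilin_ext_diff_left bilin_ext_scale_left bilin_ext_scale_right)

lemma single_pair_eq_tcons: "Poly_Mapping.single (a, w) c = tcons a (Poly_Mapping.single w c)"
  by simp

lemma additive_tcons_eqI:
  fixes f g :: "('a \<times> 'a list \<Rightarrow>\<^sub>0 'k::field) \<Rightarrow> 'm::ab_group_add"
  assumes "additive f" and "additive g" and "\<And>a x. f (tcons a x) = g (tcons a x)"
  shows "f x = g x"
  by (rule additive_poly_mapping_eqI[OF assms(1,2)]) (metis assms(3) single_pair_eq_tcons prod.collapse)

lemma biadditive_tcons_eqI:
  fixes F G :: "('a \<times> 'a list \<Rightarrow>\<^sub>0 'k::field) \<Rightarrow> ('a \<times> 'a list \<Rightarrow>\<^sub>0 'k) \<Rightarrow> 'm::ab_group_add"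
  assumes "\<And>y. additive (\<lambda>x. F x y)" and "\<And>x. additive (F x)"
    and "\<And>y. additive (\<lambda>x. G x y)" and "\<And>x. additive (G x)"
    and "\<And>a x b y. F (tcons a x) (tcons b y) = G (tcons a x) (tcons b y)"
  shows "F x y = G x y"
  by (rule biadditive_poly_mapping_eqI[OF assms(1-4)]) (metis assms(5) single_pair_eq_tcons prod.collapse)

lemma PA_tcons: "PA (tcons a x) = tcons 1 (lcons a x)"
  by (rule additive_poly_mapping_eqI[where f = "\<lambda>x. PA (tcons a x)"])
     (simp_all add: additive_def PA_add tcons_add lcons_add)

section \<open>The left-shift shuffle\<close>

lemma lsh_Nil_right [simp]: "lsh u [] = Poly_Mapping.single u 1"
  by (cases u) simp_all

lemma lsh_commute: "lsh u v = lsh v u"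
  by (induction u v rule: lsh.induct) (simp_all add: algebra_simps)

lemma lsh_one_left: "lsh (1 # u) v = lcons 1 (lsh u v)"
  by (induction v arbitrary: u) (simp_all add: lcons_add lcons_diff)

abbreviation shuffle :: "('a::comm_ring_1 list \<Rightarrow>\<^sub>0 'k::field) \<Rightarrow> ('a list \<Rightarrow>\<^sub>0 'k) \<Rightarrow> ('a list \<Rightarrow>\<^sub>0 'k)" where
  "shuffle \<equiv> bilin_ext lsh"

lemma shuffle_commute: "shuffle x y = shuffle y x"
  by (rule biadditive_poly_mapping_eqI[where F = shuffle])
     (simp_all add: additive_bilin_ext lsh_commute mult.commute)

lemma shuffle_Nil_left: "shuffle (Poly_Mapping.single [] 1) y = y"
  by (rule additive_poly_mapping_eqI[where f = "shuffle (Poly_Mapping.single [] 1)"])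
     (simp_all add: additive_bilin_ext additive.intro)

lemma shuffle_Nil_right: "shuffle x (Poly_Mapping.single [] 1) = x"
  using shuffle_Nil_left shuffle_commute by metis

lemma shuffle_lcons_one_left: "shuffle (lcons 1 x) y = lcons 1 (shuffle x y)"
  by (rule biadditive_poly_mapping_eqI[where F = "\<lambda>x y. shuffle (lcons 1 x) y"])
     (simp_all add: additive_def bilin_ext_add_left bilin_ext_add_right lcons_add lcons_pm_scale
       lsh_one_left)

lemma shuffle_lcons_one_right: "shuffle x (lcons 1 y) = lcons 1 (shuffle x y)"
  using shuffle_lcons_one_left shuffle_commute by metis

lemma shuffle_lcons_lcons:
  "shuffle (lcons a x) (lcons b y) =
     lcons a (shuffle x (lcons b y)) + lcons b (shuffle (lcons a x) y)
   - lcons (a * b) (lcons 1 (shuffle x y))"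
  by (rule biadditive_poly_mapping_eqI[where F = "\<lambda>x y. shuffle (lcons a x) (lcons b y)"])
     (simp_all add: additive_def bilin_ext_add_left bilin_ext_add_right lcons_add lcons_diff
       lcons_pm_scale pm.scale_right_distrib pm.scale_right_diff_distrib algebra_simps)

definition triple_shuffle_rec ::
    "('a::comm_ring_1 list \<Rightarrow> 'a list \<Rightarrow> 'a list \<Rightarrow> ('a list \<Rightarrow>\<^sub>0 'k::field)) \<Rightarrow> bool" where
  "triple_shuffle_rec F \<longleftrightarrow> (\<forall>a U b V c W.
     F (a # U) (b # V) (c # W) =
       lcons a (F U (b # V) (c # W)) + lcons b (F (a # U) V (c # W)) + lcons c (F (a # U) (b # V) W)
     - lcons (a * b) (lcons 1 (F U V (c # W))) - lcons (a * c) (lcons 1 (F U (b # V) W))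
     - lcons (b * c) (lcons 1 (F (a # U) V W)) + lcons (a * b * c) (lcons 1 (lcons 1 (F U V W))))"

lemma triple_shuffle_rec_unique:
  assumes "triple_shuffle_rec F" and "triple_shuffle_rec G"
    and "\<And>u v w. u = [] \<or> v = [] \<or> w = [] \<Longrightarrow> F u v w = G u v w"
  shows "F u v w = G u v w"
proof (induction "length u + length v + length w" arbitrary: u v w rule: less_induct)
  case less
  show ?case
  proof (cases "u = [] \<or> v = [] \<or> w = []")
    case True
    then show ?thesis by (rule assms(3))
  next
    case False
    then obtain a U b V c W where "u = a # U" "v = b # V" "w = c # W"
      by (meson list.exhaust)
    with assms(1,2) less show ?thesis
      by (simp add: triple_shuffle_rec_def)
  qed
qed

lemma triple_shuffle_rec_swap:
  assumes "triple_shuffle_rec F"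
  shows "triple_shuffle_rec (\<lambda>u v w. F w v u)"
  unfolding triple_shuffle_rec_def
proof (intro allI)
  fix a U b V c W
  show "F (c # W) (b # V) (a # U) =
       lcons a (F (c # W) (b # V) U) + lcons b (F (c # W) V (a # U)) + lcons c (F W (b # V) (a # U))
     - lcons (a * b) (lcons 1 (F (c # W) V U)) - lcons (a * c) (lcons 1 (F W (b # V) U))
     - lcons (b * c) (lcons 1 (F W V (a # U))) + lcons (a * b * c) (lcons 1 (lcons 1 (F W V U)))"
    using assms[unfolded triple_shuffle_rec_def, rule_format, of c W b V a U]
    by (simp add: algebra_simps)
qed

lemma shuffle_lsh_lcons:
  "shuffle (lsh (a # U) (b # V)) (lcons c E) =
     lcons a (shuffle (lsh U (b # V)) (lcons c E)) + lcons b (shuffle (lsh (a # U) V) (lcons c E))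
   + lcons c (shuffle (lsh (a # U) (b # V)) E)
   - lcons (a * b) (lcons 1 (shuffle (lsh U V) (lcons c E)))
   - lcons (a * c) (lcons 1 (shuffle (lsh U (b # V)) E))
   - lcons (b * c) (lcons 1 (shuffle (lsh (a # U) V) E))
   + lcons (a * b * c) (lcons 1 (lcons 1 (shuffle (lsh U V) E)))"
  by (simp add: bilin_ext_add_left bilin_ext_diff_left shuffle_lcons_lcons shuffle_lcons_one_left
      lcons_add lcons_diff algebra_simps)

lemma triple_shuffle_rec_left:
  "triple_shuffle_rec (\<lambda>u v w. shuffle (lsh u v) (Poly_Mapping.single w (1::'k::field)))"
  unfolding triple_shuffle_rec_def
  by (intro allI, use shuffle_lsh_lcons[where E = "Poly_Mapping.single W 1" for W] in simp)

lemma lsh_assoc: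
  "shuffle (lsh u v) (Poly_Mapping.single w 1) = shuffle (Poly_Mapping.single u 1) (lsh v w)"
proof -
  have "shuffle (lsh u v) (Poly_Mapping.single w 1) = shuffle (lsh w v) (Poly_Mapping.single u 1)"
    by (rule triple_shuffle_rec_unique[OF triple_shuffle_rec_left
          triple_shuffle_rec_swap[OF triple_shuffle_rec_left]])
       (auto simp: shuffle_Nil_right lsh_commute)
  then show ?thesis
    by (simp add: shuffle_commute lsh_commute)
qed

lemma shuffle_assoc:
  fixes x y z :: "'a::comm_ring_1 list \<Rightarrow>\<^sub>0 'k::field"
  shows "shuffle (shuffle x y) z = shuffle x (shuffle y z)"
proof (rule biadditive_poly_mapping_eqI[where F = "\<lambda>x y. shuffle (shuffle x y) z"])
  fix u v :: "'a list" and c d :: 'k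
  show "shuffle (shuffle (Poly_Mapping.single u c) (Poly_Mapping.single v d)) z =
        shuffle (Poly_Mapping.single u c) (shuffle (Poly_Mapping.single v d) z)"
  proof (rule additive_poly_mapping_eqI[where
        f = "shuffle (shuffle (Poly_Mapping.single u c) (Poly_Mapping.single v d))"])
    fix w :: "'a list" and e :: 'k
    show "shuffle (shuffle (Poly_Mapping.single u c) (Poly_Mapping.single v d)) (Poly_Mapping.single w e) =
        shuffle (Poly_Mapping.single u c) (shuffle (Poly_Mapping.single v d) (Poly_Mapping.single w e))"
      by (simp add: bilin_ext_single_coeff(2)[of _ _ w e] bilin_ext_single_coeff(1)[of _ u c]
          bilin_ext_scale_left bilin_ext_scale_right lsh_assoc mult_ac)
  qed (simp_all add: additive_def bilin_ext_add_right)
qed (simp_all add: additive_def bilin_ext_add_left bilin_ext_add_right)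

section \<open>The algebra T^+(A)\<close>

lemma tp_mult_tcons: "tp_mult (tcons a x) (tcons b y) = tcons (a * b) (shuffle x y)"
  by (rule biadditive_poly_mapping_eqI[where F = "\<lambda>x y. tp_mult (tcons a x) (tcons b y)"])
     (simp_all add: additive_def tcons_add tp_mult_add_left tp_mult_add_right tcons_pm_scale
       tp_mult_eq_bilin_ext tp_mult_w_def bilin_ext_add_left bilin_ext_add_right)

lemma tp_mult_commute: "tp_mult x y = tp_mult y x"
  by (rule biadditive_poly_mapping_eqI[where F = tp_mult])
     (simp_all add: tp_mult_eq_bilin_ext additive_bilin_ext tp_mult_w_def lsh_commute mult.commute)

lemma tp_mult_one_left: "tp_mult tp_one x = x"
  by (rule additive_poly_mapping_eqI[where f = "tp_mult tp_one"])
     (auto simp: additive_def tp_one_def tp_mult_eq_bilin_ext bilin_ext_add_right tp_mult_w_def)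

lemma tp_mult_assoc: "tp_mult (tp_mult x y) z = tp_mult x (tp_mult y z)"
proof (rule biadditive_tcons_eqI[where F = "\<lambda>x y. tp_mult (tp_mult x y) z"])
  show "tp_mult (tp_mult (tcons a x) (tcons b y)) z = tp_mult (tcons a x) (tp_mult (tcons b y) z)" for a x b y
    by (rule additive_tcons_eqI[where f = "tp_mult (tp_mult (tcons a x) (tcons b y))"])
       (simp_all add: additive_def tp_mult_add_right tp_mult_tcons shuffle_assoc mult.assoc)
qed (simp_all add: additive_def tp_mult_add_left tp_mult_add_right)

lemma PA_tp_one: "PA tp_one = tcons 1 (lcons 1 (Poly_Mapping.single [] 1))"
  by (simp add: tp_one_def)

lemma tp_mult_PA_one: "tp_mult (tcons a x) (PA tp_one) = tcons a (lcons 1 x)"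
  by (simp only: PA_tp_one tp_mult_tcons shuffle_lcons_one_right shuffle_Nil_right mult_1_right)

lemma tp_mult_PA_PA_tcons:
  "tp_mult (PA (tcons a x)) (PA (tcons b y)) =
     PA (tp_mult (PA (tcons a x)) (tcons b y) + tp_mult (tcons a x) (PA (tcons b y)))
   - PA (tp_mult (tp_mult (tcons a x) (PA tp_one)) (tcons b y))"
  by (simp only: PA_tcons tp_mult_tcons tp_mult_PA_one shuffle_lcons_lcons shuffle_lcons_one_left
      PA_add PA_diff tcons_add tcons_diff mult_1_left mult_1_right add.commute)

lemma tp_mult_PA_PA:
  "tp_mult (PA x) (PA y) =
     PA (tp_mult (PA x) y + tp_mult x (PA y)) - PA (tp_mult (tp_mult x (PA tp_one)) y)"
  by (rule biadditive_tcons_eqI[where F = "\<lambda>x y. tp_mult (PA x) (PA y)"])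
     (simp_all add: additive_def tp_mult_add_left tp_mult_add_right PA_add PA_diff algebra_simps
       tp_mult_PA_PA_tcons)

section \<open>Multilinearity relations\<close>

text \<open>The generators of \<^const>\<open>tp_rel\<close> are the two kinds of formal letter relations
  \<^term>\<open>D\<close> inserted at one position of a word, \<^term>\<open>plug xs D ys\<close>.\<close>

inductive letter_rel :: "('k::field \<Rightarrow> 'a \<Rightarrow> 'a::ab_group_add) \<Rightarrow> ('a \<Rightarrow>\<^sub>0 'k) \<Rightarrow> bool" for s where
  add: "letter_rel s
    (Poly_Mapping.single (a + b) 1 - Poly_Mapping.single a 1 - Poly_Mapping.single b 1)"
| scale: "letter_rel s (Poly_Mapping.single (s c a) 1 - Poly_Mapping.single a c)"

definition plug :: "'a list \<Rightarrow> ('a \<Rightarrow>\<^sub>0 'k::field) \<Rightarrow> 'a list \<Rightarrow> ('a list \<Rightarrow>\<^sub>0 'k)" where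
  "plug xs D ys = lin_ext pm_scale (\<lambda>a. Poly_Mapping.single (xs @ a # ys) 1) D"

inductive_set word_rel :: "('k::field \<Rightarrow> 'a \<Rightarrow> 'a::ab_group_add) \<Rightarrow> ('a list \<Rightarrow>\<^sub>0 'k) set" for s where
  zero: "0 \<in> word_rel s"
| add: "x \<in> word_rel s \<Longrightarrow> y \<in> word_rel s \<Longrightarrow> x + y \<in> word_rel s"
| scale: "x \<in> word_rel s \<Longrightarrow> pm_scale c x \<in> word_rel s"
| plug: "letter_rel s D \<Longrightarrow> plug xs D ys \<in> word_rel s"

lemma (in vector_space) lin_ext_letter_rel:
  assumes "letter_rel s D"
    and "\<And>a b. g (a + b) = g a + g b" and "\<And>c a. g (s c a) = c *s g a"
  shows "lin_ext scale g D = 0"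
  using assms(1) by cases (simp_all add: lin_ext_diff assms(2,3))

lemma word_rel_diff: "x \<in> word_rel s \<Longrightarrow> y \<in> word_rel s \<Longrightarrow> x - y \<in> word_rel s"
  using word_rel.add[of x s "pm_scale (-1) y"] word_rel.scale[of y s "-1"] by simp

lemma letter_rel_mult_right:
  fixes s :: "'k::field \<Rightarrow> 'a::comm_ring_1 \<Rightarrow> 'a"
  assumes "letter_rel s D" and "\<And>c a b. s c a * b = s c (a * b)"
  obtains D' where "letter_rel s D'" and "\<And>g. lin_ext pm_scale (\<lambda>a. g (a * e)) D = lin_ext pm_scale g D'"
  using assms(1)
proof cases
  case (add a b)
  show thesis
    by (rule that[OF letter_rel.add[of s "a * e" "b * e"]])
       (simp add: add pm.lin_ext_diff distrib_right)
next
  case (scale c a)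
  show thesis
    by (rule that[OF letter_rel.scale[of s c "a * e"]])
       (simp add: scale pm.lin_ext_diff assms(2))
qed

lemma lcons_plug: "lcons e (plug xs D ys) = plug (e # xs) D ys"
  unfolding plug_def by (simp add: pm.lin_ext_compose lcons_add lcons_pm_scale)

lemma lcons_word_rel: "x \<in> word_rel s \<Longrightarrow> lcons e x \<in> word_rel s"
  by (induction rule: word_rel.induct) (auto intro: word_rel.intros simp: lcons_add lcons_pm_scale lcons_plug)

lemma lin_ext_lcons_word_rel:
  assumes "letter_rel s D"
  shows "lin_ext pm_scale (\<lambda>a. lcons a y) D \<in> word_rel s"
proof (induction y rule: poly_mapping_single_induct)
  case zero
  show ?case by (simp add: lin_ext_def word_rel.zero)
next
  case (add w c y)
  have "lin_ext pm_scale (\<lambda>a. Poly_Mapping.single (a # w) c) D = pm_scale c (plug [] D w)"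
    unfolding plug_def by (simp flip: pm.lin_ext_fun_scale)
  then show ?case
    using add assms by (simp add: lcons_add pm.lin_ext_fun_add word_rel.intros)
qed

lemma lin_ext_lcons: "lin_ext pm_scale (\<lambda>a. lcons x (g a)) D = lcons x (lin_ext pm_scale g D)"
  by (simp add: pm.lin_ext_compose lcons_add lcons_pm_scale)

lemma lsh_plug_word_rel:
  fixes s :: "'k::field \<Rightarrow> 'a::comm_ring_1 \<Rightarrow> 'a"
  assumes D: "letter_rel s D" and compat: "\<And>c a b. s c a * b = s c (a * b)"
  shows "lin_ext pm_scale (\<lambda>a. lsh (xs @ a # ys) W) D \<in> word_rel s"
proof (induction W arbitrary: xs)
  case Nil
  show ?case using word_rel.plug[OF D] by (simp add: plug_def)
next
  case (Cons c W)
  note outer = Cons.IH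
  show ?case
  proof (induction xs)
    case Nil
    obtain D' where D': "letter_rel s D'"
      and mult: "\<And>g :: 'a \<Rightarrow> 'a list \<Rightarrow>\<^sub>0 'k. lin_ext pm_scale (\<lambda>a. g (a * c)) D = lin_ext pm_scale g D'"
      using letter_rel_mult_right[OF D compat, of c] by blast
    have "lin_ext pm_scale (\<lambda>a. lsh ([] @ a # ys) (c # W)) D =
        lin_ext pm_scale (\<lambda>a. lcons a (lsh ys (c # W))) D + lcons c (lin_ext pm_scale (\<lambda>a. lsh ([] @ a # ys) W) D)
      - lin_ext pm_scale (\<lambda>a. lcons a (lcons 1 (lsh ys W))) D'"
      by (simp add: pm.lin_ext_fun_add pm.lin_ext_fun_diff lin_ext_lcons mult[of "\<lambda>a. lcons a (lcons 1 (lsh ys W))"])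
    also have "\<dots> \<in> word_rel s"
      by (intro word_rel_diff word_rel.add lin_ext_lcons_word_rel D D' lcons_word_rel outer)
    finally show ?case .
  next
    case (Cons x xs)
    have "lin_ext pm_scale (\<lambda>a. lsh ((x # xs) @ a # ys) (c # W)) D =
        lcons x (lin_ext pm_scale (\<lambda>a. lsh (xs @ a # ys) (c # W)) D)
      + lcons c (lin_ext pm_scale (\<lambda>a. lsh ((x # xs) @ a # ys) W) D)
      - lcons (x * c) (lcons 1 (lin_ext pm_scale (\<lambda>a. lsh (xs @ a # ys) W) D))"
      by (simp add: pm.lin_ext_fun_add pm.lin_ext_fun_diff lin_ext_lcons)
    also have "\<dots> \<in> word_rel s"
      by (intro word_rel_diff word_rel.add lcons_word_rel Cons.IH outer)
    finally show ?case .
  qed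
qed

lemma shuffle_plug: "shuffle (plug xs D ys) y = lin_ext pm_scale (\<lambda>a. shuffle (Poly_Mapping.single (xs @ a # ys) 1) y) D"
  unfolding plug_def
  by (rule pm.lin_ext_compose[where L = "\<lambda>x. shuffle x y"]) (simp_all add: bilin_ext_add_left bilin_ext_scale_left)

lemma shuffle_word_rel:
  fixes s :: "'k::field \<Rightarrow> 'a::comm_ring_1 \<Rightarrow> 'a"
  assumes compat: "\<And>c a b. s c a * b = s c (a * b)" and "x \<in> word_rel s"
  shows "shuffle x y \<in> word_rel s"
  using assms(2)
proof induction
  case (plug D xs ys)
  show ?case
  proof (induction y rule: poly_mapping_single_induct)
    case (add W c y)
    have "shuffle (plug xs D ys) (Poly_Mapping.single W c) =
        pm_scale c (lin_ext pm_scale (\<lambda>a. lsh (xs @ a # ys) W) D)"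
      by (simp add: bilin_ext_single_coeff(2)[of _ _ W c] shuffle_plug)
    then show ?case
      using add lsh_plug_word_rel[OF plug compat]
      by (simp add: bilin_ext_add_right word_rel.add word_rel.scale)
  qed (simp add: word_rel.zero)
qed (simp_all add: bilin_ext_add_left bilin_ext_scale_left word_rel.intros)

text \<open>Reads a nonempty word \<^term>\<open>a # w\<close> as the pure tensor \<open>a \<otimes> w\<close> of T^+(A).
  The empty word goes to a junk value, but only nonempty words occur below.\<close>

definition tp_of_words :: "('a list \<Rightarrow>\<^sub>0 'k::field) \<Rightarrow> ('a \<times> 'a list \<Rightarrow>\<^sub>0 'k)" where
  "tp_of_words = lin_ext pm_scale tword"

lemma
  shows tp_of_words_single [simp]: "tp_of_words (Poly_Mapping.single (a # w) c) = Poly_Mapping.single (a, w) c"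
    and tp_of_words_zero [simp]: "tp_of_words 0 = 0"
    and tp_of_words_add: "tp_of_words (x + y) = tp_of_words x + tp_of_words y"
    and tp_of_words_diff: "tp_of_words (x - y) = tp_of_words x - tp_of_words y"
    and tp_of_words_pm_scale: "tp_of_words (pm_scale c x) = pm_scale c (tp_of_words x)"
  by (simp_all add: tp_of_words_def tword_def pm.lin_ext_add pm.lin_ext_diff pm.lin_ext_pm_scale)

lemma tcons_eq_tp_of_words: "tcons a x = tp_of_words (lcons a x)"
  by (rule additive_poly_mapping_eqI[where f = "tcons a"])
     (simp_all add: additive_def tcons_add lcons_add tp_of_words_add)

lemma lin_ext_tp_of_words: "lin_ext pm_scale (\<lambda>a. tp_of_words (g a)) D = tp_of_words (lin_ext pm_scale g D)"
  by (simp add: pm.lin_ext_compose tp_of_words_add tp_of_words_pm_scale)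

lemma tword_gen_add_eq:
  "tword (xs @ (a + b) # ys) - tword (xs @ a # ys) - tword (xs @ b # ys) =
     tp_of_words (plug xs (Poly_Mapping.single (a + b) 1 - Poly_Mapping.single a 1 - Poly_Mapping.single b 1) ys)"
  by (simp add: plug_def pm.lin_ext_diff tp_of_words_diff) (simp add: tp_of_words_def)

lemma tword_gen_scale_eq:
  "tword (xs @ s c a # ys) - pm_scale c (tword (xs @ a # ys)) =
     tp_of_words (plug xs (Poly_Mapping.single (s c a) 1 - Poly_Mapping.single a c) ys)"
  by (simp add: plug_def pm.lin_ext_diff tp_of_words_diff tp_of_words_pm_scale) (simp add: tp_of_words_def)

lemma tp_rel_induct [consumes 1, case_names zero add scale plug]:
  assumes "x \<in> tp_rel s"
    and "P 0"
    and "\<And>x y. P x \<Longrightarrow> P y \<Longrightarrow> P (x + y)"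
    and "\<And>x c. P x \<Longrightarrow> P (pm_scale c x)"
    and "\<And>D xs ys. letter_rel s D \<Longrightarrow> P (tp_of_words (plug xs D ys))"
  shows "P x"
  using assms(1)
proof induction
  case (gen_add xs a b ys)
  show ?case unfolding tword_gen_add_eq by (rule assms(5)[OF letter_rel.add])
next
  case (gen_scale xs c a ys)
  show ?case unfolding tword_gen_scale_eq by (rule assms(5)[OF letter_rel.scale])
qed (use assms(2-4) in auto)

lemma tp_of_words_word_rel: "x \<in> word_rel s \<Longrightarrow> tp_of_words x \<in> tp_rel s"
proof (induction rule: word_rel.induct)
  case (plug D xs ys)
  then show ?case
    by cases (simp_all only: tword_gen_add_eq[symmetric] tword_gen_scale_eq[symmetric] tp_rel.gen_add tp_rel.gen_scale)
qed (simp_all add: tp_of_words_add tp_of_words_pm_scale tp_rel.intros)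

lemma PA_tp_of_words_plug: "PA (tp_of_words (plug xs D ys)) = tp_of_words (plug (1 # xs) D ys)"
proof (rule additive_poly_mapping_eqI[where f = "\<lambda>D. PA (tp_of_words (plug xs D ys))"])
  show "additive (\<lambda>D. PA (tp_of_words (plug xs D ys)))" "additive (\<lambda>D. tp_of_words (plug (1 # xs) D ys))"
    by (simp_all add: additive_def plug_def pm.lin_ext_add tp_of_words_add PA_add)
qed (cases xs; simp add: plug_def)

lemma PA_tp_rel: "x \<in> tp_rel s \<Longrightarrow> PA x \<in> tp_rel s"
  by (induction rule: tp_rel_induct)
     (simp_all add: PA_add PA_pm_scale PA_tp_of_words_plug tp_of_words_word_rel word_rel.plug tp_rel.intros)

lemma tp_mult_single_tcons:
  "tp_mult (Poly_Mapping.single (a, w) 1) (tcons e z) =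
     tp_of_words (lcons (a * e) (shuffle (Poly_Mapping.single w 1) z))"
  using tp_mult_tcons[of a "Poly_Mapping.single w 1" e z] by (simp add: tcons_eq_tp_of_words)

lemma tp_mult_plug_tcons:
  "tp_mult (tp_of_words (plug xs D ys)) (tcons e z) =
     lin_ext pm_scale (\<lambda>a. tp_mult (tp_of_words (Poly_Mapping.single (xs @ a # ys) 1)) (tcons e z)) D"
  unfolding plug_def
  by (rule pm.lin_ext_compose[where L = "\<lambda>x. tp_mult (tp_of_words x) (tcons e z)"])
     (simp_all add: tp_of_words_add tp_of_words_pm_scale tp_mult_add_left tp_mult_scale_left)

lemma tp_mult_tp_rel:
  fixes s :: "'k::field \<Rightarrow> 'a::comm_ring_1 \<Rightarrow> 'a"
  assumes compat: "\<And>c a b. s c a * b = s c (a * b)" and "x \<in> tp_rel s"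
  shows "tp_mult x y \<in> tp_rel s"
  using assms(2)
proof (induction rule: tp_rel_induct)
  case (plug D xs ys)
  have "tp_mult (tp_of_words (plug xs D ys)) (tcons e z) \<in> tp_rel s" for e z
  proof (cases xs)
    case Nil
    obtain D' where D': "letter_rel s D'"
      and mult: "\<And>g :: 'a \<Rightarrow> 'a list \<Rightarrow>\<^sub>0 'k. lin_ext pm_scale (\<lambda>a. g (a * e)) D = lin_ext pm_scale g D'"
      using letter_rel_mult_right[OF plug compat, of e] by blast
    have "tp_mult (tp_of_words (plug xs D ys)) (tcons e z) =
        tp_of_words (lin_ext pm_scale (\<lambda>a. lcons a (shuffle (Poly_Mapping.single ys 1) z)) D')"
      by (simp add: Nil tp_mult_plug_tcons tp_mult_single_tcons lin_ext_tp_of_words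
          mult[of "\<lambda>a. lcons a (shuffle (Poly_Mapping.single ys 1) z)"])
    then show ?thesis
      by (simp add: tp_of_words_word_rel lin_ext_lcons_word_rel[OF D'])
  next
    case (Cons x xs')
    have "tp_mult (tp_of_words (plug xs D ys)) (tcons e z) =
        tp_of_words (lcons (x * e) (shuffle (plug xs' D ys) z))"
      by (simp add: Cons tp_mult_plug_tcons tp_mult_single_tcons lin_ext_tp_of_words lin_ext_lcons shuffle_plug)
    then show ?thesis
      by (simp add: tp_of_words_word_rel lcons_word_rel shuffle_word_rel[OF compat] word_rel.plug[OF plug])
  qed
  then show ?case
  proof (induction y rule: poly_mapping_single_induct)
    case (add u c y)
    then show ?case
      by (metis single_pair_eq_tcons prod.collapse tp_mult_add_right tp_rel.add)
  qed (simp add: tp_rel.zero)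
qed (simp_all add: tp_mult_add_left tp_mult_scale_left tp_rel.intros)

lemma tp_is_comm_tdI:
  fixes sa :: "'k::field \<Rightarrow> 'a::comm_ring_1 \<Rightarrow> 'a"
  assumes "kalg sa"
  shows "tp_is_comm_td sa"
proof -
  have compat: "sa c a * b = sa c (a * b)" for c a b
    using assms by (simp add: kalg_def)
  have iA_eq_tword: "iA a = tword [a]" for a :: 'a
    by (simp add: iA_def tword_def)
  show ?thesis
    unfolding tp_is_comm_td_def tp_eq_def
  proof (intro conjI allI impI)
    show "tp_mult x y \<in> tp_rel sa" if "x \<in> tp_rel sa" for x y :: "'a \<times> 'a list \<Rightarrow>\<^sub>0 'k"
      by (rule tp_mult_tp_rel[of sa, OF compat that])
    show "(iA (a + b) :: 'a \<times> 'a list \<Rightarrow>\<^sub>0 'k) - (iA a + iA b) \<in> tp_rel sa" for a b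
      using tp_rel.gen_add[of "[]" a b "[]" sa] by (simp add: iA_eq_tword diff_diff_eq)
    show "iA (sa c a) - pm_scale c (iA a) \<in> tp_rel sa" for c a
      using tp_rel.gen_scale[of "[]" sa c a "[]"] by (simp add: iA_eq_tword)
    show "(iA (a * b) :: 'a \<times> 'a list \<Rightarrow>\<^sub>0 'k) - tp_mult (iA a) (iA b) \<in> tp_rel sa" for a b
      by (simp add: iA_def tp_mult_eq_bilin_ext tp_mult_w_def tp_rel.zero)
    show "(iA 1 :: 'a \<times> 'a list \<Rightarrow>\<^sub>0 'k) = tp_one"
      by (simp add: iA_def tp_one_def)
    show "tp_mult x y - tp_mult y x \<in> tp_rel sa" for x y :: "'a \<times> 'a list \<Rightarrow>\<^sub>0 'k"
      using tp_mult_commute[of x y] by (simp add: tp_rel.zero)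
  qed (simp_all add: PA_tp_rel tp_mult_assoc tp_mult_one_left tp_mult_PA_PA tp_rel.zero)
qed

section \<open>The universal property\<close>

locale td_lift =
  fixes sa :: "'k::field \<Rightarrow> 'a::comm_ring_1 \<Rightarrow> 'a"
    and sb :: "'k \<Rightarrow> 'b::comm_ring_1 \<Rightarrow> 'b"
    and P :: "'b \<Rightarrow> 'b"
    and \<phi> :: "'a \<Rightarrow> 'b"
  assumes kalg_sb: "kalg sb" and td_alg_P: "td_alg sb P" and hom_\<phi>: "ualg_hom sa sb \<phi>"
begin

sublocale B: vector_space sb
  using kalg_sb by (simp add: kalg_def)

lemma scale_mult_left: "sb c x * y = sb c (x * y)"
  using kalg_sb by (simp add: kalg_def)

lemma scale_mult_right: "x * sb c y = sb c (x * y)"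
  using scale_mult_left[of c y x] by (simp add: mult.commute)

lemma
  shows P_add: "P (x + y) = P x + P y"
    and P_scale: "P (sb c x) = sb c (P x)"
    and P_TD: "P x * P y = P (P x * y + x * P y) - P (x * P 1 * y)"
  using td_alg_P by (simp_all add: td_alg_def Vector_Spaces.linear_iff)

lemma P_diff: "P (x - y) = P x - P y"
  using P_add[of "x - y" y] by simp

lemma
  shows \<phi>_add: "\<phi> (x + y) = \<phi> x + \<phi> y"
    and \<phi>_scale: "\<phi> (sa c x) = sb c (\<phi> x)"
    and \<phi>_one: "\<phi> 1 = 1"
    and \<phi>_mult: "\<phi> (x * y) = \<phi> x * \<phi> y"
  using hom_\<phi> by (simp_all add: ualg_hom_def Vector_Spaces.linear_iff)

lemma P_P: "P (P x) = P x * P 1"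
  using P_TD[of x 1] by (simp add: P_add)

text \<open>\<^term>\<open>word_val w\<close> is the value of the extension on \<open>1 \<otimes> w\<close>.\<close>

primrec word_val :: "'a list \<Rightarrow> 'b" where
  "word_val [] = 1"
| "word_val (c # w) = P (\<phi> c * word_val w)"

definition words_val :: "('a list \<Rightarrow>\<^sub>0 'k) \<Rightarrow> 'b" where
  "words_val = lin_ext sb word_val"

definition lift :: "('a \<times> 'a list \<Rightarrow>\<^sub>0 'k) \<Rightarrow> 'b" where
  "lift = lin_ext sb (\<lambda>(a, w). \<phi> a * word_val w)"

lemma
  shows words_val_single [simp]: "words_val (Poly_Mapping.single w c) = sb c (word_val w)"
    and words_val_add: "words_val (x + y) = words_val x + words_val y"
    and words_val_diff: "words_val (x - y) = words_val x - words_val y"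
    and words_val_pm_scale: "words_val (pm_scale c x) = sb c (words_val x)"
  by (simp_all add: words_val_def B.lin_ext_add B.lin_ext_diff B.lin_ext_pm_scale)

lemma
  shows lift_single [simp]: "lift (Poly_Mapping.single (a, w) c) = sb c (\<phi> a * word_val w)"
    and lift_zero [simp]: "lift 0 = 0"
    and lift_add: "lift (x + y) = lift x + lift y"
    and lift_pm_scale: "lift (pm_scale c x) = sb c (lift x)"
  by (simp_all add: lift_def B.lin_ext_add B.lin_ext_diff B.lin_ext_pm_scale)

lemma words_val_lcons: "words_val (lcons a x) = P (\<phi> a * words_val x)"
  by (rule additive_poly_mapping_eqI[where f = "\<lambda>x. words_val (lcons a x)"])
     (simp_all add: additive_def words_val_add lcons_add distrib_left P_add scale_mult_right P_scale)

lemma lift_tcons: "lift (tcons a x) = \<phi> a * words_val x"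
  by (rule additive_poly_mapping_eqI[where f = "\<lambda>x. lift (tcons a x)"])
     (simp_all add: additive_def lift_add tcons_add words_val_add distrib_left scale_mult_right)

lemma word_val_mult_eq_P:
  assumes "U \<noteq> [] \<or> V \<noteq> []"
  obtains m where "word_val U * word_val V = P m"
proof (cases U)
  case Nil
  with assms obtain d V' where "V = d # V'"
    by (cases V) auto
  with Nil that show thesis by simp
next
  case (Cons c U')
  show thesis
  proof (cases V)
    case Nil
    with Cons that show thesis by simp
  next
    case (Cons d V')
    with \<open>U = c # U'\<close> that show thesis
      by (simp only: word_val.simps P_TD flip: P_diff)
  qed
qed

lemma P_word_val_mult: "P (word_val U * word_val V) = P 1 * word_val U * word_val V"
proof (cases "U = [] \<and> V = []")
  case False
  then obtain m where m: "word_val U * word_val V = P m"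
    using word_val_mult_eq_P by blast
  have "P (word_val U * word_val V) = P 1 * (word_val U * word_val V)"
    by (simp add: m P_P mult.commute)
  then show ?thesis
    by (simp add: mult.assoc)
qed simp

lemma words_val_lsh: "words_val (lsh U V) = word_val U * word_val V"
proof (induction U V rule: lsh.induct)
  case (3 a U b V)
  define x where "x = \<phi> a * word_val U"
  define y where "y = \<phi> b * word_val V"
  have "words_val (lsh (a # U) (b # V)) =
      P (\<phi> a * (word_val U * P y)) + P (\<phi> b * (P x * word_val V))
    - P (\<phi> a * \<phi> b * P (word_val U * word_val V))"
    using 3 by (simp add: words_val_add words_val_diff words_val_lcons x_def y_def \<phi>_mult \<phi>_one)
  also have "\<dots> = P (P x * y + x * P y) - P (x * P 1 * y)"
    by (simp add: P_word_val_mult x_def y_def P_add algebra_simps)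
  also have "\<dots> = word_val (a # U) * word_val (b # V)"
    by (simp add: P_TD x_def y_def)
  finally show ?case .
qed simp_all

lemma words_val_shuffle: "words_val (shuffle x y) = words_val x * words_val y"
  by (rule biadditive_poly_mapping_eqI[where F = "\<lambda>x y. words_val (shuffle x y)"])
     (simp_all add: additive_def bilin_ext_add_left bilin_ext_add_right words_val_add distrib_left
       distrib_right words_val_pm_scale words_val_lsh scale_mult_left scale_mult_right)

lemma lift_tp_mult: "lift (tp_mult x y) = lift x * lift y"
  by (rule biadditive_tcons_eqI[where F = "\<lambda>x y. lift (tp_mult x y)"])
     (simp_all add: additive_def tp_mult_add_left tp_mult_add_right lift_add distrib_left distrib_right
       tp_mult_tcons lift_tcons words_val_shuffle \<phi>_mult mult_ac)

lemma lift_PA: "lift (PA x) = P (lift x)"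
  by (rule additive_tcons_eqI[where f = "\<lambda>x. lift (PA x)"])
     (simp_all add: additive_def lift_add PA_add P_add PA_tcons lift_tcons words_val_lcons \<phi>_one)

lemma lift_iA: "lift (iA a) = \<phi> a"
  by (simp add: iA_def)

lemma lift_tp_one: "lift tp_one = 1"
  by (simp add: tp_one_def \<phi>_one)

lemma word_val_letter_linear:
  shows "word_val (xs @ (a + b) # ys) = word_val (xs @ a # ys) + word_val (xs @ b # ys)"
    and "word_val (xs @ sa c a # ys) = sb c (word_val (xs @ a # ys))"
  by (induction xs) (simp_all add: \<phi>_add \<phi>_scale distrib_left distrib_right P_add P_scale
      scale_mult_left scale_mult_right)

lemma lift_tp_rel: "x \<in> tp_rel sa \<Longrightarrow> lift x = 0"
proof (induction rule: tp_rel_induct)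
  case (plug D xs ys)
  have "lift (tp_of_words (plug xs D ys)) =
      lin_ext sb (\<lambda>a. lift (tp_of_words (Poly_Mapping.single (xs @ a # ys) 1))) D"
    unfolding plug_def
    by (rule B.lin_ext_compose[where L = "\<lambda>x. lift (tp_of_words x)"])
       (simp_all add: lift_add lift_pm_scale tp_of_words_add tp_of_words_pm_scale)
  also have "\<dots> = 0"
    using plug by (rule B.lin_ext_letter_rel)
       (cases xs; simp add: word_val_letter_linear \<phi>_add \<phi>_scale distrib_left distrib_right
         scale_mult_left scale_mult_right)+
  finally show ?case .
qed (simp_all add: lift_add lift_pm_scale)

lemma lift_td_hom: "tp_td_hom sa sb P lift"
  unfolding tp_td_hom_def
  by (simp add: lift_add lift_pm_scale lift_tp_rel lift_tp_one lift_tp_mult lift_PA)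

lemma lift_unique:
  assumes f: "tp_td_hom sa sb P f" and f_iA: "\<And>a. f (iA a) = \<phi> a"
  shows "f x = lift x"
proof -
  have word: "f (Poly_Mapping.single (a, U) 1) = \<phi> a * word_val U" for a U
  proof (induction U arbitrary: a)
    case Nil
    show ?case using f_iA by (simp add: iA_def)
  next
    case (Cons c U)
    have word_eq:
      "Poly_Mapping.single (a, c # U) 1 = tp_mult (iA a) (PA (Poly_Mapping.single (c, U) 1))"
      by (simp add: iA_def tp_mult_eq_bilin_ext tp_mult_w_def)
    have "f (Poly_Mapping.single (a, c # U) 1) = f (iA a) * P (f (Poly_Mapping.single (c, U) 1))"
      using f unfolding word_eq by (simp add: tp_td_hom_def del: PA_single)
    then show ?case
      using Cons f_iA by simp
  qed
  show ?thesis
  proof (rule additive_poly_mapping_eqI[where f = f])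
    show "additive f"
      using f by (simp add: tp_td_hom_def additive_def)
    show "f (Poly_Mapping.single u c) = lift (Poly_Mapping.single u c)" for u c
    proof (cases u)
      case (Pair a U)
      have "f (Poly_Mapping.single u c) = f (pm_scale c (Poly_Mapping.single u 1))"
        by simp
      also have "\<dots> = sb c (\<phi> a * word_val U)"
        using f word by (simp add: tp_td_hom_def Pair del: pm_scale_single)
      finally show ?thesis
        by (simp add: Pair)
    qed
  qed (simp add: additive_def lift_add)
qed

lemma ex1_lift: "\<exists>!\<psi>. tp_td_hom sa sb P \<psi> \<and> (\<forall>a. \<psi> (iA a) = \<phi> a)"
proof (rule ex1I[where a = lift])
  show "tp_td_hom sa sb P lift \<and> (\<forall>a. lift (iA a) = \<phi> a)"
    by (simp add: lift_td_hom lift_iA)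
  show "\<psi> = lift" if "tp_td_hom sa sb P \<psi> \<and> (\<forall>a. \<psi> (iA a) = \<phi> a)" for \<psi>
    using that lift_unique by blast
qed

end

theorem theorem4p8:
  fixes sa :: "'k::field_char_0 \<Rightarrow> 'a::comm_ring_1 \<Rightarrow> 'a"
  assumes "kalg sa"
  shows "tp_is_comm_td sa \<and>
    (\<forall>(sb :: 'k \<Rightarrow> 'b::comm_ring_1 \<Rightarrow> 'b) P \<phi>.
       kalg sb \<longrightarrow> td_alg sb P \<longrightarrow> ualg_hom sa sb \<phi> \<longrightarrow>
       (\<exists>!\<psi>. tp_td_hom sa sb P \<psi> \<and> (\<forall>a. \<psi> (iA a) = \<phi> a)))"
  using tp_is_comm_tdI[OF assms] td_lift.ex1_lift[OF td_lift.intro] by blast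

end
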